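(* Every $L$-selective $T_1$-space is an $\alpha_1$-space.
   Context: For spaces $Y$, $X$, a map $\varphi:Y\to\mathcal P(X)\setminus\{\emptyset\}$ is lower semicontinuous (l.s.c.) if $\{y:\varphi(y)\cap U\neq\emptyset\}$ is open in $Y$ for every open $U\subseteq X$; a selection is a map $f:Y\to X$ with $f(y)\in\varphi(y)$ for all $y$. $X$ is $Y$-selective if every l.s.c. map from $Y$ to the family of nonempty closed subsets of $X$ has a continuous selection. $X$ is $L$-selective if it is $(\omega+1)$-selective, where $\omega+1$ carries the order topology (a convergent sequence with its limit). A space $X$ is an $\alpha_1$-space if for every $x\in X$ and every countable family $\{A_n\}_{n\in\omega}$ of sequences converging to $x$ there is a sequence $A$ converging to $x$ such that $A_n\setminus A$ is finite for every $n$. *)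

theory Defs
  imports "HOL-Analysis.Analysis" "HOL-Library.Extended_Nat"
begin

text \<open>The space omega+1 with its order topology, realised on enat (infinity = omega):
  every finite point is isolated, and the neighbourhoods of infinity are the cofinal sets.\<close>
definition omega_plus_one :: "enat topology" where
  "omega_plus_one = topology (\<lambda>U. \<infinity> \<in> U \<longrightarrow> (\<exists>n. \<forall>m\<ge>n. enat m \<in> U))"

definition lsc_closed_valued :: "'b topology \<Rightarrow> 'a topology \<Rightarrow> ('b \<Rightarrow> 'a set) \<Rightarrow> bool" where
  "lsc_closed_valued Y X \<phi> \<longleftrightarrow>
     (\<forall>y\<in>topspace Y. \<phi> y \<noteq> {} \<and> closedin X (\<phi> y)) \<and>
     (\<forall>U. openin X U \<longrightarrow> openin Y {y \<in> topspace Y. \<phi> y \<inter> U \<noteq> {}})"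

definition selective :: "'b topology \<Rightarrow> 'a topology \<Rightarrow> bool" where
  "selective Y X \<longleftrightarrow>
     (\<forall>\<phi>. lsc_closed_valued Y X \<phi> \<longrightarrow>
        (\<exists>f. continuous_map Y X f \<and> (\<forall>y\<in>topspace Y. f y \<in> \<phi> y)))"

definition L_selective :: "'a topology \<Rightarrow> bool" where
  "L_selective X \<longleftrightarrow> selective omega_plus_one X"

text \<open>alpha_1-space: sequences are maps nat => X, and "A_n minus A" is the difference of their
  sets of terms.\<close>
definition alpha1_space :: "'a topology \<Rightarrow> bool" where
  "alpha1_space X \<longleftrightarrow>
     (\<forall>x\<in>topspace X. \<forall>A :: nat \<Rightarrow> nat \<Rightarrow> 'a.
        (\<forall>n. range (A n) \<subseteq> topspace X \<and> limitin X (A n) x sequentially) \<longrightarrow>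
        (\<exists>S :: nat \<Rightarrow> 'a. range S \<subseteq> topspace X \<and> limitin X S x sequentially \<and>
            (\<forall>n. finite (range (A n) - range S))))"

end

theory Submission
  imports Defs
begin

text \<open>Let sequences \<open>A k\<close> converge to \<open>x\<close>. If no sequence of points different from \<open>x\<close>
  converges to \<open>x\<close>, each \<open>A k\<close> takes only finitely many values besides \<open>x\<close> and the constant
  sequence \<open>x\<close> does the job. Otherwise pick such a sequence \<open>p\<close>, enumerate \<open>\<nat> \<times> \<nat>\<close> as a
  sequence and consider the map on \<open>\<omega>+1\<close> sending \<open>\<omega>\<close> to \<open>{x}\<close> and the point \<open>(k, j)\<close> to
  \<open>{p k, A k j}\<close>. It is lower semicontinuous, and a continuous selection \<open>s\<close> is a sequence
  converging to \<open>x\<close>. Since \<open>p k \<noteq> x\<close> and \<open>x\<close> has a neighbourhood missing \<open>p k\<close>, the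
  selection picks \<open>A k j\<close> for all but finitely many \<open>j\<close>; replacing the terms of \<open>s\<close> that
  are not of the form \<open>A k j\<close> by \<open>x\<close> gives the required sequence.\<close>

lemma istopology_omega_plus_one:
  "istopology (\<lambda>U. \<infinity> \<in> U \<longrightarrow> (\<exists>n. \<forall>m\<ge>n. enat m \<in> U))"
  unfolding istopology_def
proof (intro conjI allI impI)
  fix S T :: "enat set"
  assume "\<infinity> \<in> S \<longrightarrow> (\<exists>n. \<forall>m\<ge>n. enat m \<in> S)" "\<infinity> \<in> T \<longrightarrow> (\<exists>n. \<forall>m\<ge>n. enat m \<in> T)"
    and "\<infinity> \<in> S \<inter> T"
  then obtain a b where "\<forall>m\<ge>a. enat m \<in> S" "\<forall>m\<ge>b. enat m \<in> T" by auto
  then show "\<exists>n. \<forall>m\<ge>n. enat m \<in> S \<inter> T"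
    by (intro exI[of _ "max a b"]) auto
qed blast

lemma openin_omega_plus_one:
  "openin omega_plus_one U \<longleftrightarrow> (\<infinity> \<in> U \<longrightarrow> (\<forall>\<^sub>F m in sequentially. enat m \<in> U))"
  unfolding omega_plus_one_def eventually_sequentially
  using istopology_omega_plus_one by (simp add: topology_inverse')

lemma topspace_omega_plus_one [simp]: "topspace omega_plus_one = UNIV"
  using openin_subset[of omega_plus_one UNIV] by (simp add: openin_omega_plus_one top_unique)

lemma continuous_map_omega_plus_one_limitin:
  assumes "continuous_map omega_plus_one X f"
  shows "limitin X (\<lambda>m. f (enat m)) (f \<infinity>) sequentially"
  unfolding limitin_def
proof (intro conjI allI impI)
  show "f \<infinity> \<in> topspace X"
    using assms by (auto simp: continuous_map_def)
  fix U
  assume "openin X U \<and> f \<infinity> \<in> U"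
  then have "openin omega_plus_one {y. f y \<in> U}" "\<infinity> \<in> {y. f y \<in> U}"
    using assms by (auto simp: continuous_map_def)
  then show "\<forall>\<^sub>F m in sequentially. f (enat m) \<in> U"
    unfolding openin_omega_plus_one by simp
qed

lemma lsc_closed_valued_omega_plus_oneI:
  assumes "\<And>y. \<phi> y \<noteq> {} \<and> closedin X (\<phi> y)"
    and "\<And>U. openin X U \<Longrightarrow> \<phi> \<infinity> \<inter> U \<noteq> {} \<Longrightarrow> \<forall>\<^sub>F m in sequentially. \<phi> (enat m) \<inter> U \<noteq> {}"
  shows "lsc_closed_valued omega_plus_one X \<phi>"
  using assms unfolding lsc_closed_valued_def openin_omega_plus_one by auto

lemma eventually_prod_decode_disj:
  assumes "\<forall>\<^sub>F k in sequentially. P k" and "\<And>k. \<forall>\<^sub>F j in sequentially. Q k j"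
  shows "\<forall>\<^sub>F m in sequentially. case prod_decode m of (k, j) \<Rightarrow> P k \<or> Q k j"
proof -
  have "finite (Sigma {k. \<not> P k} (\<lambda>k. {j. \<not> Q k j}))"
    using assms by (intro finite_SigmaI) (simp_all flip: cofinite_eq_sequentially add: eventually_cofinite)
  moreover have "{m. \<not> (case prod_decode m of (k, j) \<Rightarrow> P k \<or> Q k j)}
      \<subseteq> prod_encode ` Sigma {k. \<not> P k} (\<lambda>k. {j. \<not> Q k j})"
  proof
    fix m
    assume "m \<in> {m. \<not> (case prod_decode m of (k, j) \<Rightarrow> P k \<or> Q k j)}"
    moreover obtain k j where "prod_decode m = (k, j)" by fastforce
    moreover from this have "m = prod_encode (k, j)" by (metis prod_decode_inverse)
    ultimately show "m \<in> prod_encode ` Sigma {k. \<not> P k} (\<lambda>k. {j. \<not> Q k j})" by auto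
  qed
  ultimately show ?thesis
    unfolding cofinite_eq_sequentially [symmetric] eventually_cofinite
    by (meson finite_imageI finite_subset)
qed

lemma limitin_subsequence_avoiding:
  assumes "limitin X a x sequentially" and "infinite {j. a j \<noteq> x}"
  obtains b where "limitin X b x sequentially" and "range b \<subseteq> range a - {x}"
proof
  let ?r = "enumerate {j. a j \<noteq> x}"
  show "limitin X (a \<circ> ?r) x sequentially"
    by (rule limitin_subsequence[OF strict_mono_enumerate[OF assms(2)] assms(1)])
  show "range (a \<circ> ?r) \<subseteq> range a - {x}"
    using enumerate_in_set[OF assms(2)] by auto
qed

lemma finite_values_without_avoiding_subsequence:
  assumes "limitin X a x sequentially"
    and "\<nexists>b. limitin X b x sequentially \<and> range b \<subseteq> range a - {x}"
  shows "finite (range a - {x})"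
proof -
  have "finite {j. a j \<noteq> x}"
    using limitin_subsequence_avoiding[OF assms(1)] assms(2) by metis
  then show ?thesis
    by (rule finite_subset[rotated, OF finite_imageI]) auto
qed

lemma limitin_sequentially_if_limit:
  assumes "limitin X s x sequentially"
  shows "limitin X (\<lambda>m. if P m then s m else x) x sequentially"
  using assms unfolding limitin_def by (auto elim: eventually_mono)

lemma L_selective_pair_selection:
  assumes "t1_space X" and "L_selective X"
    and "limitin X p x sequentially" and "range p \<subseteq> topspace X"
    and "\<And>k. limitin X (A k) x sequentially" and "\<And>k. range (A k) \<subseteq> topspace X"
  obtains s where "limitin X s x sequentially" and "\<And>k j. s (prod_encode (k, j)) \<in> {p k, A k j}"
proof -
  define \<phi> where "\<phi> y = (case y of
      \<infinity> \<Rightarrow> {x} | enat m \<Rightarrow> (case prod_decode m of (k, j) \<Rightarrow> {p k, A k j}))" for y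
  have x: "x \<in> topspace X"
    using assms(3) limitin_topspace by metis
  have "lsc_closed_valued omega_plus_one X \<phi>"
  proof (rule lsc_closed_valued_omega_plus_oneI)
    fix y
    have "finite (\<phi> y)" "\<phi> y \<subseteq> topspace X" "\<phi> y \<noteq> {}"
      using x assms(4,6) by (auto simp: \<phi>_def image_subset_iff split: enat.split prod.split)
    then show "\<phi> y \<noteq> {} \<and> closedin X (\<phi> y)"
      using assms(1) t1_space_closedin_finite by blast
  next
    fix U
    assume "openin X U" and "\<phi> \<infinity> \<inter> U \<noteq> {}"
    then have "\<forall>\<^sub>F k in sequentially. p k \<in> U" "\<And>k. \<forall>\<^sub>F j in sequentially. A k j \<in> U"
      using assms(3,5) by (auto simp: \<phi>_def limitin_def)
    then show "\<forall>\<^sub>F m in sequentially. \<phi> (enat m) \<inter> U \<noteq> {}"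
      by (rule eventually_mono[OF eventually_prod_decode_disj]) (auto simp: \<phi>_def split: prod.splits)
  qed
  then obtain f where f: "continuous_map omega_plus_one X f" "\<And>y. f y \<in> \<phi> y"
    using assms(2) unfolding L_selective_def selective_def by auto
  show thesis
  proof
    show "limitin X (\<lambda>m. f (enat m)) x sequentially"
      using continuous_map_omega_plus_one_limitin[OF f(1)] f(2)[of \<infinity>] by (simp add: \<phi>_def)
    show "f (enat (prod_encode (k, j))) \<in> {p k, A k j}" for k j
      using f(2)[of "enat (prod_encode (k, j))"] by (simp add: \<phi>_def)
  qed
qed

lemma finite_row_selects_other_point:
  assumes "t1_space X" and "limitin X s x sequentially" and "p \<noteq> x"
    and "\<And>j. s (prod_encode (k, j)) \<in> {p, a j}"
  shows "finite {j. s (prod_encode (k, j)) \<noteq> a j}"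
proof -
  have "openin X (topspace X - {p})"
    using assms(1) openin_topspace unfolding t1_space_openin_delete_alt by blast
  moreover have "x \<in> topspace X - {p}"
    using assms(2,3) limitin_topspace by fastforce
  ultimately have "\<forall>\<^sub>F m in sequentially. s m \<in> topspace X - {p}"
    using assms(2) unfolding limitin_def by blast
  then obtain N where N: "\<And>m. m \<ge> N \<Longrightarrow> s m \<noteq> p"
    unfolding eventually_sequentially by blast
  have "\<forall>\<^sub>F j in sequentially. s (prod_encode (k, j)) = a j"
    unfolding eventually_sequentially
  proof (intro exI allI impI)
    fix j
    assume "N \<le> j"
    then have "s (prod_encode (k, j)) \<noteq> p"
      using N[OF order.trans[OF _ le_prod_encode_2]] by blast
    then show "s (prod_encode (k, j)) = a j"
      using assms(4) by blast
  qed
  then show ?thesis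
    unfolding cofinite_eq_sequentially[symmetric] eventually_cofinite by simp
qed

lemma limitin_absorbing_rows:
  assumes "t1_space X" and "limitin X s x sequentially"
    and "\<And>k j. s (prod_encode (k, j)) \<in> {p k, A k j}"
    and "\<And>k. p k \<noteq> x" and "\<And>k. range (A k) \<subseteq> topspace X"
  obtains S where "range S \<subseteq> topspace X" and "limitin X S x sequentially"
    and "\<And>k. finite (range (A k) - range S)"
proof
  define S where "S m = (if s m = case_prod A (prod_decode m) then s m else x)" for m
  have x: "x \<in> topspace X"
    using assms(2) limitin_topspace by metis
  show "range S \<subseteq> topspace X"
    using x assms(5) by (auto simp: S_def image_subset_iff split: prod.split)
  show "limitin X S x sequentially"
    unfolding S_def by (rule limitin_sequentially_if_limit[OF assms(2)])
  fix k
  have "range (A k) - range S \<subseteq> A k ` {j. s (prod_encode (k, j)) \<noteq> A k j}"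
  proof clarify
    fix j
    assume "A k j \<notin> range S"
    then have "s (prod_encode (k, j)) \<noteq> A k j"
      by (metis S_def case_prod_conv prod_encode_inverse rangeI)
    then show "A k j \<in> A k ` {j. s (prod_encode (k, j)) \<noteq> A k j}"
      by blast
  qed
  moreover have "finite {j. s (prod_encode (k, j)) \<noteq> A k j}"
    using finite_row_selects_other_point[OF assms(1,2,4) assms(3)] .
  ultimately show "finite (range (A k) - range S)"
    by (meson finite_imageI finite_subset)
qed

theorem mainTheorem3:
  fixes X :: "'a topology"
  assumes "t1_space X" and "L_selective X"
  shows "alpha1_space X"
  unfolding alpha1_space_def
proof (intro ballI allI impI)
  fix x and A :: "nat \<Rightarrow> nat \<Rightarrow> 'a"
  assume x: "x \<in> topspace X"
    and A: "\<forall>k. range (A k) \<subseteq> topspace X \<and> limitin X (A k) x sequentially"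
  show "\<exists>S. range S \<subseteq> topspace X \<and> limitin X S x sequentially \<and> (\<forall>k. finite (range (A k) - range S))"
  proof (cases "\<exists>p. limitin X p x sequentially \<and> range p \<subseteq> topspace X - {x}")
    case False
    have "\<nexists>b. limitin X b x sequentially \<and> range b \<subseteq> range (A k) - {x}" for k
      using False A by (meson Diff_mono order_refl order_trans)
    then have "finite (range (A k) - range (\<lambda>_. x))" for k
      using finite_values_without_avoiding_subsequence[of X "A k" x] A by simp
    then show ?thesis
      using x by (intro exI[of _ "\<lambda>_. x"]) auto
  next
    case True
    then obtain p where p: "limitin X p x sequentially" "range p \<subseteq> topspace X - {x}"
      by blast
    obtain s where s: "limitin X s x sequentially" "\<And>k j. s (prod_encode (k, j)) \<in> {p k, A k j}"
      using L_selective_pair_selection[OF assms p(1)] p(2) A by blast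
    have "\<And>k. p k \<noteq> x" "\<And>k. range (A k) \<subseteq> topspace X"
      using p(2) A by blast+
    with limitin_absorbing_rows[OF assms(1) s] show ?thesis
      by metis
  qed
qed

end
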